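(* Let $\phi:\mathbb{R}^n\to\mathbb{R}$ satisfy Assumption A, and let $\gamma,\nu$ satisfy $$0<\gamma<\frac{2}{2+L_\phi},\qquad 0<\nu<\big(4\gamma-2\gamma^2(2+L_\phi)\big)^{1/2}.$$ Then the discrete-time heavy-ball system with state $(u,w)\in\mathbb{R}^n\times\mathbb{R}^n$ and input $e\in\mathbb{R}^n$, $$u^+=u-\gamma(\nabla\phi(u)+e)+\nu(u-w),\qquad w^+=u,$$ is ISS with respect to $\mathcal{A}_d=\{(u^\star,u^\star)\}$.
   Context: Assumption A: $\phi$ is continuously differentiable and there exist $L_\phi>0$, $u^\star\in\mathbb{R}^n$ and class-$\mathcal{K}_\infty$ functions $\mu_1,\mu_2$ such that $\nabla\phi(u)=0$ iff $u=u^\star$, and for all $u,\tilde u\in\mathbb{R}^n$: $\mu_1(\|u-u^\star\|)\le\phi(u)-\phi(u^\star)$, $\mu_2(\phi(u)-\phi(u^\star))\le\|\nabla\phi(u)\|$, and $\|\nabla\phi(u)-\nabla\phi(\tilde u)\|\le L_\phi\|u-\tilde u\|$. ISS: the system $x^+=G_d(x,e)$ is ISS with respect to a compact set $\mathcal{A}_d$ if there exist $\beta\in\mathcal{KL}$, $\alpha\in\mathcal{K}_\infty$ such that for every bounded input sequence $e$ every solution satisfies $|x(j)|_{\mathcal{A}_d}\le\beta(|x(0)|_{\mathcal{A}_d},j)+\alpha(\sup_k\|e(k)\|)$ for all $j\in\mathbb{N}$. *)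

theory Defs
  imports "HOL-Analysis.Analysis"
begin

definition class_K :: "(real \<Rightarrow> real) \<Rightarrow> bool" where
  "class_K \<alpha> \<longleftrightarrow> continuous_on {0..} \<alpha> \<and> \<alpha> 0 = 0 \<and> strict_mono_on {0..} \<alpha>"

definition class_K_inf :: "(real \<Rightarrow> real) \<Rightarrow> bool" where
  "class_K_inf \<alpha> \<longleftrightarrow> class_K \<alpha> \<and> filterlim \<alpha> at_top at_top"

definition class_KL :: "(real \<Rightarrow> real \<Rightarrow> real) \<Rightarrow> bool" where
  "class_KL \<beta> \<longleftrightarrow>
     (\<forall>s\<ge>0. class_K (\<lambda>r. \<beta> r s)) \<and>
     (\<forall>r\<ge>0. antimono_on {0..} (\<lambda>s. \<beta> r s) \<and> ((\<lambda>s. \<beta> r s) \<longlongrightarrow> 0) at_top)"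

definition assumption_A ::
  "('a::euclidean_space \<Rightarrow> real) \<Rightarrow> ('a \<Rightarrow> 'a) \<Rightarrow> real \<Rightarrow> 'a \<Rightarrow> (real \<Rightarrow> real) \<Rightarrow> (real \<Rightarrow> real) \<Rightarrow> bool"
  where
  "assumption_A \<phi> g L u\<^sub>s \<mu>1 \<mu>2 \<longleftrightarrow>
     (\<forall>u. (\<phi> has_derivative (\<lambda>h. g u \<bullet> h)) (at u)) \<and> continuous_on UNIV g \<and>
     L > 0 \<and> class_K_inf \<mu>1 \<and> class_K_inf \<mu>2 \<and>
     (\<forall>u. g u = 0 \<longleftrightarrow> u = u\<^sub>s) \<and>
     (\<forall>u. \<mu>1 (norm (u - u\<^sub>s)) \<le> \<phi> u - \<phi> u\<^sub>s) \<and>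
     (\<forall>u. \<mu>2 (\<phi> u - \<phi> u\<^sub>s) \<le> norm (g u)) \<and>
     (\<forall>u v. norm (g u - g v) \<le> L * norm (u - v))"

definition ISS :: "('x::real_normed_vector \<Rightarrow> 'e::real_normed_vector \<Rightarrow> 'x) \<Rightarrow> 'x set \<Rightarrow> bool" where
  "ISS G A \<longleftrightarrow> compact A \<and>
     (\<exists>\<beta> \<alpha>. class_KL \<beta> \<and> class_K_inf \<alpha> \<and>
       (\<forall>(x::nat \<Rightarrow> 'x) (e::nat \<Rightarrow> 'e).
          bdd_above (range (\<lambda>k. norm (e k))) \<and> (\<forall>j. x (Suc j) = G (x j) (e j)) \<longrightarrow>
          (\<forall>j. infdist (x j) A \<le> \<beta> (infdist (x 0) A) (real j) + \<alpha> (SUP k. norm (e k)))))"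

definition heavy_ball :: "('a::real_normed_vector \<Rightarrow> 'a) \<Rightarrow> real \<Rightarrow> real \<Rightarrow> 'a \<times> 'a \<Rightarrow> 'a \<Rightarrow> 'a \<times> 'a" where
  "heavy_ball g \<gamma> \<nu> x e = (let u = fst x; w = snd x in
      (u - \<gamma> *\<^sub>R (g u + e) + \<nu> *\<^sub>R (u - w), u))"

end

theory Submission
  imports Defs
begin

text \<open>With \<open>c = (1 - \<gamma>) / \<gamma> - L / 2 > 0\<close>, the function
  \<open>V (u, w) = \<phi> u - \<phi> u\<^sub>s + c \<parallel>u - w\<parallel>\<^sup>2\<close> is an ISS-Lyapunov function: the descent lemma for
  \<open>L\<close>-Lipschitz gradients and the bounds on \<open>\<gamma>\<close> and \<open>\<nu>\<close> (a negative definite quadratic form in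
  \<open>\<parallel>\<nabla>\<phi> u\<parallel>\<close>, \<open>\<parallel>u - w\<parallel>\<close>, perturbed by \<open>\<parallel>e\<parallel>\<close>) give
  \<open>V\<^sup>+ \<le> V - \<epsilon> (\<parallel>\<nabla>\<phi> u\<parallel>\<^sup>2 + \<parallel>u - w\<parallel>\<^sup>2) + C \<parallel>e\<parallel>\<^sup>2\<close>, and Assumption A bounds the
  dissipation below by a positive definite function of \<open>V\<close>. Then \<open>V\<close> stays below the maximum of
  the iterates of a class-K map \<open>f t < t\<close> started at \<open>V(0)\<close> and a gain of \<open>sup \<parallel>e\<parallel>\<close>, and
  the iterates yield the class-KL bound.\<close>

lemma class_K_nonneg: "class_K f \<Longrightarrow> 0 \<le> x \<Longrightarrow> 0 \<le> f x"
  unfolding class_K_def by (metis atLeast_iff order.refl order_le_less strict_mono_onD)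

lemma class_K_mono: "class_K f \<Longrightarrow> 0 \<le> x \<Longrightarrow> x \<le> y \<Longrightarrow> f x \<le> f y"
  unfolding class_K_def by (metis atLeast_iff order.trans order_le_less strict_mono_onD)

lemma class_K_strict_mono: "class_K f \<Longrightarrow> 0 \<le> x \<Longrightarrow> x < y \<Longrightarrow> f x < f y"
  unfolding class_K_def by (meson atLeast_iff order.trans order_less_imp_le strict_mono_onD)

lemma class_K_pos: "class_K f \<Longrightarrow> 0 < x \<Longrightarrow> 0 < f x"
  using class_K_strict_mono[of f 0 x] unfolding class_K_def by simp

lemma class_K_le_iff: "class_K f \<Longrightarrow> 0 \<le> x \<Longrightarrow> 0 \<le> y \<Longrightarrow> f x \<le> f y \<longleftrightarrow> x \<le> y"
  by (metis class_K_strict_mono class_K_mono linorder_not_le)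

lemma class_K_comp:
  assumes "class_K f" "class_K g"
  shows "class_K (\<lambda>x. f (g x))"
proof -
  have "continuous_on {0..} (\<lambda>x. f (g x))"
    using assms class_K_nonneg[OF assms(2)] unfolding class_K_def
    by (intro continuous_on_compose2[of "{0..}" f "{0..}" g]) auto
  moreover have "strict_mono_on {0..} (\<lambda>x. f (g x))"
    by (rule strict_mono_onI) (metis class_K_strict_mono class_K_nonneg assms atLeast_iff)
  ultimately show ?thesis using assms unfolding class_K_def by simp
qed

lemma class_K_add:
  assumes "class_K f" "class_K g"
  shows "class_K (\<lambda>x. f x + g x)"
proof -
  have "continuous_on {0..} (\<lambda>x. f x + g x)"
    using assms unfolding class_K_def by (intro continuous_intros) auto
  moreover have "strict_mono_on {0..} (\<lambda>x. f x + g x)"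
    by (rule strict_mono_onI) (metis class_K_strict_mono add_strict_mono assms atLeast_iff)
  ultimately show ?thesis using assms unfolding class_K_def by simp
qed

lemma class_K_cmult:
  assumes "class_K f" "0 < c"
  shows "class_K (\<lambda>x. c * f x)"
  using assms unfolding class_K_def
  by (auto intro!: continuous_on_mult_left strict_mono_onI mult_strict_left_mono
      elim: strict_mono_onD)

lemma class_K_id: "class_K (\<lambda>x. x)"
  unfolding class_K_def by (auto intro!: continuous_intros strict_mono_onI)

lemma class_K_sqrt: "class_K sqrt"
  unfolding class_K_def by (auto intro!: continuous_intros strict_mono_onI)

lemma class_K_power2: "class_K (\<lambda>x. x\<^sup>2)"
  unfolding class_K_def by (auto intro!: continuous_intros strict_mono_onI power_strict_mono)

lemma class_K_inf_add_id:
  assumes "class_K f"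
  shows "class_K_inf (\<lambda>x. f x + x)"
proof -
  have "filterlim (\<lambda>x. f x + x) at_top at_top"
  proof (rule filterlim_at_top_mono[OF filterlim_ident])
    show "\<forall>\<^sub>F x in at_top. x \<le> f x + x"
      using eventually_ge_at_top[of "0::real"]
      by eventually_elim (use class_K_nonneg[OF assms] in auto)
  qed
  then show ?thesis
    unfolding class_K_inf_def using class_K_add[OF assms class_K_id] by simp
qed

text \<open>Outside \<open>f ` {0..}\<close> no such \<open>x\<close> exists, so the value is unspecified.\<close>
definition class_K_inv :: "(real \<Rightarrow> real) \<Rightarrow> real \<Rightarrow> real" where
  "class_K_inv f y = (THE x. 0 \<le> x \<and> f x = y)"

lemma class_K_inf_surj:
  assumes "class_K_inf f" "0 \<le> y"
  obtains x where "0 \<le> x" "f x = y"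
proof -
  have "\<forall>\<^sub>F x in at_top. y \<le> f x \<and> 0 \<le> x"
    using assms(1) eventually_ge_at_top[of "0::real"]
    unfolding class_K_inf_def filterlim_at_top by (auto intro: eventually_conj)
  then obtain b where b: "y \<le> f b" "0 \<le> b"
    unfolding eventually_at_top_linorder by blast
  moreover have "continuous_on {0..b} f" "f 0 = 0"
    using assms(1) unfolding class_K_inf_def class_K_def by (auto intro: continuous_on_subset)
  ultimately show ?thesis
    using IVT'[of f 0 y b] assms(2) that by auto
qed

lemma class_K_inv_unique:
  assumes "class_K f" "0 \<le> x" "f x = y"
  shows "class_K_inv f y = x"
  unfolding class_K_inv_def
proof (rule the_equality)
  fix x' assume "0 \<le> x' \<and> f x' = y"
  then show "x' = x"
    using class_K_le_iff[OF assms(1), of x' x] class_K_le_iff[OF assms(1), of x x'] assms by auto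
qed (use assms in simp)

lemma class_K_inv_apply: "class_K f \<Longrightarrow> 0 \<le> x \<Longrightarrow> class_K_inv f (f x) = x"
  by (rule class_K_inv_unique) auto

lemma class_K_inf_inv:
  assumes "class_K_inf f" "0 \<le> y"
  shows "0 \<le> class_K_inv f y" "f (class_K_inv f y) = y"
proof -
  have K: "class_K f" using assms(1) unfolding class_K_inf_def by simp
  obtain x where "0 \<le> x" "f x = y" using class_K_inf_surj[OF assms] .
  then show "0 \<le> class_K_inv f y" "f (class_K_inv f y) = y"
    using class_K_inv_unique[OF K] by auto
qed

lemma class_K_inf_inv_class_K:
  assumes f: "class_K_inf f"
  shows "class_K (class_K_inv f)"
proof -
  let ?h = "class_K_inv f"
  have K: "class_K f" using f unfolding class_K_inf_def by simp
  have h_mono: "?h y < ?h y'" if "0 \<le> y" "y < y'" for y y'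
  proof (rule ccontr)
    assume "\<not> ?h y < ?h y'"
    moreover have "0 \<le> y'" using that by simp
    ultimately have "f (?h y') \<le> f (?h y)"
      using class_K_mono[OF K class_K_inf_inv(1)[OF f]] by simp
    then show False using class_K_inf_inv[OF f] that by simp
  qed
  have "continuous (at y within {0..}) ?h" if y: "0 \<le> y" for y
  proof -
    define b where "b = ?h (y + 1)"
    have b: "0 \<le> b" "f b = y + 1" using class_K_inf_inv[OF f, of "y + 1"] y unfolding b_def by auto
    have "{0..y + 1} \<subseteq> f ` {0..b}"
    proof
      fix z assume z: "z \<in> {0..y + 1}"
      then have "?h z \<le> b"
        using h_mono[of z "y + 1"] unfolding b_def by (cases "z = y + 1") auto
      then show "z \<in> f ` {0..b}"
        using class_K_inf_inv[OF f, of z] z by (auto intro!: image_eqI[of z f "?h z"])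
    qed
    moreover have "continuous_on (f ` {0..b}) ?h"
      using K class_K_inv_apply[OF K] unfolding class_K_def
      by (intro continuous_on_inv) (auto intro: continuous_on_subset)
    ultimately have "continuous_on {0..y + 1} ?h"
      by (rule continuous_on_subset[rotated])
    then have "continuous (at y within {0..y + 1}) ?h"
      using y by (simp add: continuous_on_eq_continuous_within)
    moreover have "at y within {0..} = at y within {0..y + 1}"
      by (rule at_within_nhd[of _ "{..<y + 1}"]) auto
    ultimately show ?thesis by simp
  qed
  moreover have "?h 0 = 0"
    using class_K_inv_apply[OF K, of 0] K unfolding class_K_def by simp
  ultimately show ?thesis
    unfolding class_K_def continuous_on_eq_continuous_within
    by (auto intro!: strict_mono_onI h_mono)
qed

text \<open>The inf-convolution of \<open>a\<close> with \<open>\<bar>\<cdot>\<bar>\<close>: a \<open>1\<close>-Lipschitz minorant of \<open>a\<close>. Subtracting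
  half of it from the identity gives a strictly increasing decay map although \<open>a\<close> may grow fast.\<close>
definition lipschitz_minorant :: "(real \<Rightarrow> real) \<Rightarrow> real \<Rightarrow> real" where
  "lipschitz_minorant a t = (INF s\<in>{0..}. a s + \<bar>t - s\<bar>)"

context
  fixes a :: "real \<Rightarrow> real"
  assumes mono: "mono_on {0..} a" and zero: "a 0 = 0"
begin

private lemma nonneg: "0 \<le> s \<Longrightarrow> 0 \<le> a s"
  using mono zero by (metis atLeast_iff mono_onD order_refl)

lemma lipschitz_minorant_le: "0 \<le> s \<Longrightarrow> lipschitz_minorant a t \<le> a s + \<bar>t - s\<bar>"
  unfolding lipschitz_minorant_def
  by (rule cINF_lower) (auto intro!: bdd_belowI2[of _ 0] add_nonneg_nonneg nonneg)

lemma lipschitz_minorant_greatest: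
  "(\<And>s. 0 \<le> s \<Longrightarrow> c \<le> a s + \<bar>t - s\<bar>) \<Longrightarrow> c \<le> lipschitz_minorant a t"
  unfolding lipschitz_minorant_def by (rule cINF_greatest) auto

lemma lipschitz_minorant_nonneg: "0 \<le> lipschitz_minorant a t"
  by (rule lipschitz_minorant_greatest) (simp add: add_nonneg_nonneg nonneg)

lemma lipschitz_minorant_lipschitz:
  "lipschitz_minorant a t - lipschitz_minorant a t' \<le> \<bar>t - t'\<bar>"
proof -
  have "lipschitz_minorant a t - \<bar>t - t'\<bar> \<le> lipschitz_minorant a t'"
  proof (rule lipschitz_minorant_greatest)
    fix s :: real assume "0 \<le> s"
    then show "lipschitz_minorant a t - \<bar>t - t'\<bar> \<le> a s + \<bar>t' - s\<bar>"
      using lipschitz_minorant_le[of s t] by linarith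
  qed
  then show ?thesis by linarith
qed

lemma lipschitz_minorant_pos:
  assumes pos: "\<And>s. 0 < s \<Longrightarrow> 0 < a s" and t: "0 < t"
  shows "0 < lipschitz_minorant a t"
proof -
  have "min (a (t/2)) (t/2) \<le> lipschitz_minorant a t"
  proof (rule lipschitz_minorant_greatest)
    fix s :: real assume s: "0 \<le> s"
    show "min (a (t/2)) (t/2) \<le> a s + \<bar>t - s\<bar>"
    proof (cases "t/2 \<le> s")
      case True
      then have "a (t/2) \<le> a s" using t mono by (auto elim: mono_onD)
      then show ?thesis by linarith
    qed (use nonneg[OF s] in linarith)
  qed
  moreover have "0 < min (a (t/2)) (t/2)" using pos t by simp
  ultimately show ?thesis by linarith
qed

lemma class_K_decay_function:
  assumes pos: "\<And>s. 0 < s \<Longrightarrow> 0 < a s"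
  obtains f where "class_K f" "\<And>t. 0 \<le> t \<Longrightarrow> t - a t / 2 \<le> f t" "\<And>t. 0 < t \<Longrightarrow> f t < t"
proof
  let ?f = "\<lambda>t. t - lipschitz_minorant a t / 2"
  have "1-lipschitz_on {0..} (lipschitz_minorant a)"
  proof (rule lipschitz_onI)
    fix t t' :: real
    show "dist (lipschitz_minorant a t) (lipschitz_minorant a t') \<le> 1 * dist t t'"
      using lipschitz_minorant_lipschitz[of t t'] lipschitz_minorant_lipschitz[of t' t]
      by (simp add: dist_real_def abs_le_iff abs_minus_commute)
  qed simp
  then have "continuous_on {0..} ?f"
    by (intro continuous_intros lipschitz_on_continuous_on) simp_all
  moreover have "strict_mono_on {0..} ?f"
  proof (rule strict_mono_onI)
    fix r s :: real assume "r < s"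
    then have "lipschitz_minorant a s - lipschitz_minorant a r \<le> s - r"
      using lipschitz_minorant_lipschitz[of s r] by simp
    then show "?f r < ?f s" using \<open>r < s\<close> by simp
  qed
  moreover have "lipschitz_minorant a 0 = 0"
    using lipschitz_minorant_le[of 0 0] lipschitz_minorant_nonneg[of 0] zero by simp
  ultimately show "class_K ?f" unfolding class_K_def by simp
  show "t - a t / 2 \<le> ?f t" if "0 \<le> t" for t
    using lipschitz_minorant_le[OF that, of t] by simp
  show "?f t < t" if "0 < t" for t
    using lipschitz_minorant_pos[OF pos that] by simp
qed

end

context
  fixes f :: "real \<Rightarrow> real"
  assumes K: "class_K f" and below: "\<And>t. 0 < t \<Longrightarrow> f t < t"
begin

private lemma le: "0 \<le> t \<Longrightarrow> f t \<le> t"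
  using below[of t] K unfolding class_K_def by (cases "t = 0") auto

lemma class_K_funpow: "class_K (f ^^ n)"
proof (induction n)
  case 0
  show ?case by (simp add: class_K_id id_def)
next
  case (Suc n)
  show ?case using class_K_comp[OF K Suc] by (simp add: o_def)
qed

lemma funpow_antimono:
  assumes "0 \<le> y" "m \<le> n"
  shows "(f ^^ n) y \<le> (f ^^ m) y"
  using assms(2)
proof (induction n rule: dec_induct)
  case (step n)
  then show ?case using le[OF class_K_nonneg[OF class_K_funpow assms(1), of n]] by simp
qed simp

lemma funpow_tendsto_zero:
  assumes y: "0 \<le> y"
  shows "(\<lambda>n. (f ^^ n) y) \<longlonglongrightarrow> 0"
proof -
  have nonneg: "0 \<le> (f ^^ n) y" for n using class_K_nonneg[OF class_K_funpow y] .
  have "decseq (\<lambda>n. (f ^^ n) y)" unfolding decseq_def using funpow_antimono[OF y] by simp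
  then obtain l where l: "(\<lambda>n. (f ^^ n) y) \<longlonglongrightarrow> l"
    using nonneg decseq_convergent by blast
  have l0: "0 \<le> l" using nonneg by (intro LIMSEQ_le_const[OF l]) auto
  have "(\<lambda>n. f ((f ^^ n) y)) \<longlonglongrightarrow> f l"
    using K nonneg l0 unfolding class_K_def
    by (intro continuous_on_tendsto_compose[where s="{0..}", OF _ l]) auto
  moreover have "(\<lambda>n. f ((f ^^ n) y)) \<longlonglongrightarrow> l"
    using LIMSEQ_Suc[OF l] by simp
  ultimately have "f l = l" by (rule LIMSEQ_unique)
  then have "l = 0" using below[of l] l0 by force
  then show ?thesis using l by simp
qed

lemma class_KL_funpow:
  assumes "class_K \<psi>1" "class_K \<psi>2"
  shows "class_KL (\<lambda>r s. \<psi>1 ((f ^^ nat \<lfloor>s\<rfloor>) (\<psi>2 r)))"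
  unfolding class_KL_def
proof (intro conjI allI impI)
  fix s :: real
  show "class_K (\<lambda>r. \<psi>1 ((f ^^ nat \<lfloor>s\<rfloor>) (\<psi>2 r)))"
    by (rule class_K_comp[OF assms(1) class_K_comp[OF class_K_funpow assms(2)]])
next
  fix r :: real assume "0 \<le> r"
  then have y: "0 \<le> \<psi>2 r" using class_K_nonneg[OF assms(2)] by simp
  show "antimono_on {0..} (\<lambda>s. \<psi>1 ((f ^^ nat \<lfloor>s\<rfloor>) (\<psi>2 r)))"
    unfolding monotone_on_def
    by (intro ballI impI class_K_mono[OF assms(1) class_K_nonneg[OF class_K_funpow y]]
        funpow_antimono[OF y] nat_mono floor_mono)
  have lim: "((\<lambda>s. (f ^^ nat \<lfloor>s\<rfloor>) (\<psi>2 r)) \<longlongrightarrow> 0) at_top"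
    using filterlim_compose[OF funpow_tendsto_zero[OF y]
        filterlim_compose[OF filterlim_nat_sequentially filterlim_floor_sequentially]]
    by (simp add: o_def)
  have "((\<lambda>s. \<psi>1 ((f ^^ nat \<lfloor>s\<rfloor>) (\<psi>2 r))) \<longlongrightarrow> \<psi>1 0) at_top"
    using assms(1) class_K_nonneg[OF class_K_funpow y] unfolding class_K_def
    by (intro continuous_on_tendsto_compose[where s="{0..}", OF _ lim]) auto
  then show "((\<lambda>s. \<psi>1 ((f ^^ nat \<lfloor>s\<rfloor>) (\<psi>2 r))) \<longlongrightarrow> 0) at_top"
    using assms(1) unfolding class_K_def by simp
qed

lemma funpow_max_bound:
  fixes v :: "nat \<Rightarrow> real"
  assumes "\<And>k. 0 \<le> v k" "0 \<le> b" "\<And>k. v (Suc k) \<le> max (f (v k)) b"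
  shows "v k \<le> max ((f ^^ k) (v 0)) b"
proof (induction k)
  case (Suc k)
  have "f (v k) \<le> f (max ((f ^^ k) (v 0)) b)"
    using class_K_mono[OF K assms(1) Suc.IH] .
  also have "\<dots> \<le> max ((f ^^ Suc k) (v 0)) b"
    using class_K_mono[OF K] class_K_nonneg[OF class_K_funpow assms(1)] le[OF assms(2)] assms(2)
    by (auto simp: max_def)
  finally show ?case using assms(3)[of k] by simp
qed simp

end

theorem dissipative_Lyapunov_imp_ISS:
  fixes G :: "'x::real_normed_vector \<Rightarrow> 'e::real_normed_vector \<Rightarrow> 'x"
    and V :: "'x \<Rightarrow> real" and a \<sigma> \<rho> \<psi>1 \<psi>2 :: "real \<Rightarrow> real"
  assumes "compact A"
    and K: "class_K \<psi>1" "class_K \<psi>2" "class_K \<sigma>" "class_K \<rho>"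
    and V_nonneg: "\<And>x. 0 \<le> V x"
    and V_lower: "\<And>x. infdist x A \<le> \<psi>1 (V x)"
    and V_upper: "\<And>x. V x \<le> \<psi>2 (infdist x A)"
    and a: "mono_on {0..} a" "a 0 = 0" "\<And>t. 0 < t \<Longrightarrow> 0 < a t"
    and gain: "\<And>v s. 0 \<le> v \<Longrightarrow> 0 \<le> s \<Longrightarrow> a v < 2 * \<sigma> s \<Longrightarrow> v \<le> \<rho> s"
    and dissipation: "\<And>x e. V (G x e) \<le> V x - a (V x) + \<sigma> (norm e)"
  shows "ISS G A"
proof -
  obtain f where f: "class_K f" "\<And>t. 0 \<le> t \<Longrightarrow> t - a t / 2 \<le> f t" "\<And>t. 0 < t \<Longrightarrow> f t < t"
    using class_K_decay_function[OF a] by blast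
  have a_nonneg: "0 \<le> a t" if "0 \<le> t" for t
    using a(1,2) that by (metis atLeast_iff mono_onD order_refl)
  define q where "q s = \<rho> s + \<sigma> s" for s
  have q: "class_K q" unfolding q_def by (rule class_K_add[OF K(4,3)])
  show ?thesis
    unfolding ISS_def
  proof (intro conjI exI allI impI)
    show "class_KL (\<lambda>r s. \<psi>1 ((f ^^ nat \<lfloor>s\<rfloor>) (\<psi>2 r)))"
      by (rule class_KL_funpow[OF f(1,3) K(1,2)])
    show "class_K_inf (\<lambda>s. \<psi>1 (q s) + s)"
      by (rule class_K_inf_add_id[OF class_K_comp[OF K(1) q]])
    fix x :: "nat \<Rightarrow> 'x" and e :: "nat \<Rightarrow> 'e" and j :: nat
    assume H: "bdd_above (range (\<lambda>k. norm (e k))) \<and> (\<forall>j. x (Suc j) = G (x j) (e j))"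
    define b where "b = (SUP k. norm (e k))"
    have e_le: "norm (e k) \<le> b" for k unfolding b_def using H by (intro cSUP_upper) auto
    have b: "0 \<le> b" using e_le[of 0] norm_ge_zero[of "e 0"] by linarith
    have "V (x (Suc k)) \<le> max (f (V (x k))) (q b)" for k
    proof -
      have "\<sigma> (norm (e k)) \<le> \<sigma> b" by (rule class_K_mono[OF K(3) norm_ge_zero e_le])
      then have "V (x (Suc k)) \<le> V (x k) - a (V (x k)) + \<sigma> b"
        using dissipation[of "x k" "e k"] H by simp
      moreover have "V (x k) \<le> \<rho> b" if "a (V (x k)) < 2 * \<sigma> b"
        using gain[OF V_nonneg b that] .
      ultimately show ?thesis
        using f(2)[OF V_nonneg, of "x k"] a_nonneg[OF V_nonneg, of "x k"] unfolding q_def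
        by (cases "a (V (x k)) < 2 * \<sigma> b") (simp_all add: le_max_iff_disj)
    qed
    then have "V (x j) \<le> max ((f ^^ j) (V (x 0))) (q b)"
      by (intro funpow_max_bound[OF f(1,3) V_nonneg class_K_nonneg[OF q b]])
    then have "\<psi>1 (V (x j)) \<le> \<psi>1 (max ((f ^^ j) (V (x 0))) (q b))"
      by (rule class_K_mono[OF K(1) V_nonneg])
    also have "\<dots> \<le> \<psi>1 ((f ^^ j) (V (x 0))) + \<psi>1 (q b)"
      using class_K_nonneg[OF K(1) class_K_nonneg[OF class_K_funpow[OF f(1,3)] V_nonneg, of j "x 0"]]
        class_K_nonneg[OF K(1) class_K_nonneg[OF q b]]
      by (simp add: max_def)
    also have "\<psi>1 ((f ^^ j) (V (x 0))) \<le> \<psi>1 ((f ^^ j) (\<psi>2 (infdist (x 0) A)))"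
      by (intro class_K_mono[OF K(1)] class_K_nonneg[OF class_K_funpow[OF f(1,3)] V_nonneg]
          class_K_mono[OF class_K_funpow[OF f(1,3)] V_nonneg V_upper])
    finally show "infdist (x j) A
        \<le> \<psi>1 ((f ^^ nat \<lfloor>real j\<rfloor>) (\<psi>2 (infdist (x 0) A))) + (\<psi>1 (q (SUP k. norm (e k))) + (SUP k. norm (e k)))"
      using V_lower[of "x j"] b unfolding b_def by simp
  qed (rule assms(1))
qed

lemma lipschitz_gradient_upper_bound:
  fixes \<phi> :: "'a::real_inner \<Rightarrow> real" and g :: "'a \<Rightarrow> 'a"
  assumes deriv: "\<And>u. (\<phi> has_derivative (\<lambda>h. g u \<bullet> h)) (at u)"
    and lip: "\<And>u v. norm (g u - g v) \<le> L * norm (u - v)"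
  shows "\<phi> (u + d) \<le> \<phi> u + g u \<bullet> d + L / 2 * (norm d)\<^sup>2"
proof -
  define F where "F t = \<phi> (u + t *\<^sub>R d) - t * (g u \<bullet> d) - L / 2 * t\<^sup>2 * (norm d)\<^sup>2" for t
  have "DERIV (\<lambda>t. \<phi> (u + t *\<^sub>R d)) t :> g (u + t *\<^sub>R d) \<bullet> d" for t
  proof -
    have "((\<lambda>t. u + t *\<^sub>R d) has_derivative (\<lambda>h. h *\<^sub>R d)) (at t)"
      by (auto intro!: derivative_eq_intros)
    from has_derivative_compose[OF this deriv]
    have "((\<lambda>t. \<phi> (u + t *\<^sub>R d)) has_derivative (\<lambda>h. g (u + t *\<^sub>R d) \<bullet> (h *\<^sub>R d))) (at t)" .
    moreover have "(\<lambda>h. g (u + t *\<^sub>R d) \<bullet> (h *\<^sub>R d)) = (\<lambda>h. (g (u + t *\<^sub>R d) \<bullet> d) * h)"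
      by (auto simp: inner_scaleR_right)
    ultimately show ?thesis by (simp add: has_field_derivative_def)
  qed
  then have dF: "DERIV F t :> (g (u + t *\<^sub>R d) - g u) \<bullet> d - L * t * (norm d)\<^sup>2" for t
    unfolding F_def
    by (auto intro!: derivative_eq_intros simp: power2_eq_square algebra_simps inner_diff_left)
  have "(g (u + t *\<^sub>R d) - g u) \<bullet> d \<le> L * t * (norm d)\<^sup>2" if "0 \<le> t" for t
  proof -
    have "(g (u + t *\<^sub>R d) - g u) \<bullet> d \<le> norm (g (u + t *\<^sub>R d) - g u) * norm d"
      by (rule norm_cauchy_schwarz)
    also have "\<dots> \<le> L * norm (t *\<^sub>R d) * norm d"
      using lip[of "u + t *\<^sub>R d" u] by (intro mult_right_mono) auto
    finally show ?thesis using that by (simp add: power2_eq_square mult.assoc)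
  qed
  then have "F 1 \<le> F 0"
    using dF by (intro DERIV_nonpos_imp_nonincreasing[of 0 1 F]) force+
  then show ?thesis unfolding F_def by simp
qed

lemma quadratic_form_absorb:
  fixes A B s t1 t2 :: real
  assumes A: "0 < A" and B: "0 < B" and disc: "s\<^sup>2 < 4 * A * B"
  obtains \<epsilon> C where "0 < \<epsilon>" "0 \<le> C"
    "\<And>X Y E. - A * X\<^sup>2 + s * X * Y - B * Y\<^sup>2 + t1 * X * E + t2 * Y * E
       \<le> - \<epsilon> * (X\<^sup>2 + Y\<^sup>2) + C * E\<^sup>2"
proof -
  define e where "e = (4 * A * B - s\<^sup>2) / (4 * (A + B))"
  have e: "0 < e" using A B disc unfolding e_def by (intro divide_pos_pos) auto
  have e_eq: "e * (4 * (A + B)) = 4 * A * B - s\<^sup>2" unfolding e_def using A B by simp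
  have "e * (4 * (A + B)) \<le> 4 * A * B" using e_eq by simp
  also have "\<dots> < A * (4 * (A + B))" using A by (simp add: algebra_simps)
  finally have "e < A" using A B by simp
  have form: "- A * X\<^sup>2 + s * X * Y - B * Y\<^sup>2 \<le> - e * (X\<^sup>2 + Y\<^sup>2)" for X Y :: real
  proof -
    text \<open>The form \<open>(A - e) X\<^sup>2 - s X Y + (B - e) Y\<^sup>2\<close> is a perfect square over \<open>A - e\<close> plus a
      nonnegative multiple of \<open>Y\<^sup>2\<close>, since \<open>(A - e)(B - e) = s\<^sup>2/4 + e\<^sup>2\<close>.\<close>
    have "(A - e) * (B - e) = s\<^sup>2 / 4 + e\<^sup>2"
      using e_eq by (simp add: algebra_simps power2_eq_square)
    moreover have "(A - e) * ((A - e) * X\<^sup>2 - s * X * Y + (B - e) * Y\<^sup>2)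
        = ((A - e) * X - s * Y / 2)\<^sup>2 + ((A - e) * (B - e) - s\<^sup>2 / 4) * Y\<^sup>2"
      by (simp add: algebra_simps power2_eq_square)
    ultimately have "(A - e) * ((A - e) * X\<^sup>2 - s * X * Y + (B - e) * Y\<^sup>2)
        = ((A - e) * X - s * Y / 2)\<^sup>2 + e\<^sup>2 * Y\<^sup>2"
      by simp
    then have "0 \<le> (A - e) * ((A - e) * X\<^sup>2 - s * X * Y + (B - e) * Y\<^sup>2)" by simp
    then have "0 \<le> (A - e) * X\<^sup>2 - s * X * Y + (B - e) * Y\<^sup>2"
      using \<open>e < A\<close> by (simp add: zero_le_mult_iff)
    then show ?thesis by (simp add: algebra_simps)
  qed
  have young: "t * Z * E \<le> e / 2 * Z\<^sup>2 + t\<^sup>2 / (2 * e) * E\<^sup>2" for t Z E :: real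
  proof -
    have "2 * e * (t * Z * E) \<le> 2 * e * (e / 2 * Z\<^sup>2 + t\<^sup>2 / (2 * e) * E\<^sup>2)"
      using e zero_le_power2[of "e * Z - t * E"] by (simp add: algebra_simps power2_eq_square)
    then show ?thesis using e by simp
  qed
  show ?thesis
  proof
    show "0 < e / 2" "0 \<le> (t1\<^sup>2 + t2\<^sup>2) / (2 * e)" using e by auto
    fix X Y E :: real
    show "- A * X\<^sup>2 + s * X * Y - B * Y\<^sup>2 + t1 * X * E + t2 * Y * E
        \<le> - (e / 2) * (X\<^sup>2 + Y\<^sup>2) + (t1\<^sup>2 + t2\<^sup>2) / (2 * e) * E\<^sup>2"
      using form[of X Y] young[of t1 X E] young[of t2 Y E] by (simp add: algebra_simps add_divide_distrib)
  qed
qed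

lemma mult_inner_le_abs_mult_norm: "a * (x \<bullet> y) \<le> \<bar>a\<bar> * (norm x * norm y)"
  by (metis Cauchy_Schwarz_ineq2 abs_ge_self abs_mult abs_ge_zero mult_left_mono order_trans)

lemma heavy_ball_increment_expansion:
  fixes g d e :: "'a::real_inner"
  assumes "k * \<gamma> = 1 - \<gamma>"
  shows "g \<bullet> (\<nu> *\<^sub>R d - \<gamma> *\<^sub>R (g + e)) + k * (norm (\<nu> *\<^sub>R d - \<gamma> *\<^sub>R (g + e)))\<^sup>2 - c * (norm d)\<^sup>2
    = - \<gamma>\<^sup>2 * (norm g)\<^sup>2 + \<nu> * (2 * \<gamma> - 1) * (g \<bullet> d) - (c - k * \<nu>\<^sup>2) * (norm d)\<^sup>2
      + (\<gamma> - 2 * \<gamma>\<^sup>2) * (g \<bullet> e) - 2 * \<nu> * (1 - \<gamma>) * (d \<bullet> e) + \<gamma> * (1 - \<gamma>) * (norm e)\<^sup>2"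
proof -
  have "g \<bullet> (\<nu> *\<^sub>R d - \<gamma> *\<^sub>R (g + e)) + k * (norm (\<nu> *\<^sub>R d - \<gamma> *\<^sub>R (g + e)))\<^sup>2 - c * (norm d)\<^sup>2
    = ((k * \<gamma>) * \<gamma> - \<gamma>) * (g \<bullet> g) + \<nu> * (1 - 2 * (k * \<gamma>)) * (g \<bullet> d) - (c - k * \<nu>\<^sup>2) * (d \<bullet> d)
      + (2 * (k * \<gamma>) * \<gamma> - \<gamma>) * (g \<bullet> e) - 2 * \<nu> * (k * \<gamma>) * (d \<bullet> e) + (k * \<gamma>) * \<gamma> * (e \<bullet> e)"
    unfolding power2_norm_eq_inner
    by (simp add: inner_diff_left inner_diff_right inner_add_left inner_add_right inner_commute
        algebra_simps power2_eq_square)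
  then show ?thesis
    unfolding assms power2_norm_eq_inner by (simp add: algebra_simps power2_eq_square)
qed

lemma heavy_ball_step_size_bounds:
  fixes L \<gamma> \<nu> :: real
  assumes L: "0 < L" and \<gamma>: "0 < \<gamma>" "\<gamma> < 2 / (2 + L)"
    and \<nu>: "0 < \<nu>" "\<nu> < sqrt (4 * \<gamma> - 2 * \<gamma>\<^sup>2 * (2 + L))"
  shows "\<gamma> < 1" "0 < (1 - \<gamma>) / \<gamma> - L / 2" "\<nu>\<^sup>2 < 4 * \<gamma> - 2 * \<gamma>\<^sup>2 * (2 + L)"
proof -
  have \<gamma>L: "\<gamma> * (2 + L) < 2" using \<gamma>(2) L by (simp add: less_divide_eq)
  then show "\<gamma> < 1" using mult_pos_pos[OF \<gamma>(1) L] by (simp add: algebra_simps)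
  have "(1 - \<gamma>) / \<gamma> - L / 2 = (2 - \<gamma> * (2 + L)) / (2 * \<gamma>)" using \<gamma>(1) by (simp add: field_simps)
  then show "0 < (1 - \<gamma>) / \<gamma> - L / 2" using \<gamma>L \<gamma>(1) by simp
  have "0 < sqrt (4 * \<gamma> - 2 * \<gamma>\<^sup>2 * (2 + L))" using \<nu> by linarith
  moreover have "\<nu>\<^sup>2 < (sqrt (4 * \<gamma> - 2 * \<gamma>\<^sup>2 * (2 + L)))\<^sup>2"
    using \<nu> by (intro power_strict_mono) auto
  ultimately show "\<nu>\<^sup>2 < 4 * \<gamma> - 2 * \<gamma>\<^sup>2 * (2 + L)" by simp
qed

lemma heavy_ball_discriminant:
  fixes k c L \<gamma> \<nu> :: real
  assumes "k * \<gamma> = 1 - \<gamma>" "c = k - L / 2"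
  shows "4 * \<gamma>\<^sup>2 * (c - k * \<nu>\<^sup>2) - (\<nu> * (2 * \<gamma> - 1))\<^sup>2 = 4 * \<gamma> - 2 * \<gamma>\<^sup>2 * (2 + L) - \<nu>\<^sup>2"
proof -
  have "4 * \<gamma>\<^sup>2 * (c - k * \<nu>\<^sup>2) = 4 * \<gamma> * (k * \<gamma>) - 2 * \<gamma>\<^sup>2 * L - 4 * \<gamma> * \<nu>\<^sup>2 * (k * \<gamma>)"
    unfolding assms(2) by (simp add: algebra_simps power2_eq_square)
  then show ?thesis unfolding assms(1) by (simp add: algebra_simps power2_eq_square)
qed

lemma heavy_ball_dissipation_inequality:
  fixes L \<gamma> \<nu> :: real
  assumes "0 < L" "0 < \<gamma>" "\<gamma> < 2 / (2 + L)" "0 < \<nu>" "\<nu> < sqrt (4 * \<gamma> - 2 * \<gamma>\<^sup>2 * (2 + L))"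
  defines "c \<equiv> (1 - \<gamma>) / \<gamma> - L / 2"
  obtains \<epsilon> C where "0 < \<epsilon>" "0 < C" "0 < c"
    "\<And>g d e :: 'a::real_inner.
       g \<bullet> (\<nu> *\<^sub>R d - \<gamma> *\<^sub>R (g + e)) + (L / 2 + c) * (norm (\<nu> *\<^sub>R d - \<gamma> *\<^sub>R (g + e)))\<^sup>2
         - c * (norm d)\<^sup>2 \<le> - \<epsilon> * ((norm g)\<^sup>2 + (norm d)\<^sup>2) + C * (norm e)\<^sup>2"
proof -
  note bounds = heavy_ball_step_size_bounds[OF assms(1-5), folded c_def]
  define k where "k = (1 - \<gamma>) / \<gamma>"
  have k: "k * \<gamma> = 1 - \<gamma>" "L / 2 + c = k" unfolding k_def c_def using assms(2) by simp_all
  define B where "B = c - k * \<nu>\<^sup>2"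
  have disc: "(\<nu> * (2 * \<gamma> - 1))\<^sup>2 < 4 * \<gamma>\<^sup>2 * B"
    using heavy_ball_discriminant[OF k(1), of c L \<nu>] k(2) bounds(3) unfolding B_def by simp
  have "0 < \<gamma>\<^sup>2" using assms(2) by simp
  moreover have "0 < B"
  proof -
    have "0 < 4 * \<gamma>\<^sup>2 * B" using disc zero_le_power2[of "\<nu> * (2 * \<gamma> - 1)"] by linarith
    then show ?thesis using \<open>0 < \<gamma>\<^sup>2\<close> by (simp add: zero_less_mult_iff)
  qed
  ultimately obtain \<epsilon> C0 where \<epsilon>: "0 < \<epsilon>" "0 \<le> C0" and absorb:
    "\<And>X Y E. - \<gamma>\<^sup>2 * X\<^sup>2 + \<bar>\<nu> * (2 * \<gamma> - 1)\<bar> * X * Y - B * Y\<^sup>2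
      + \<bar>\<gamma> - 2 * \<gamma>\<^sup>2\<bar> * X * E + 2 * \<nu> * (1 - \<gamma>) * Y * E \<le> - \<epsilon> * (X\<^sup>2 + Y\<^sup>2) + C0 * E\<^sup>2"
    using quadratic_form_absorb[of "\<gamma>\<^sup>2" B "\<bar>\<nu> * (2 * \<gamma> - 1)\<bar>"] disc by (metis power2_abs)
  show ?thesis
  proof (rule that[of \<epsilon> "C0 + \<gamma> * (1 - \<gamma>)"])
    show "0 < \<epsilon>" "0 < c" by (fact \<epsilon>(1) bounds(2))+
    show "0 < C0 + \<gamma> * (1 - \<gamma>)" using \<epsilon>(2) assms(2) bounds(1) by (intro add_nonneg_pos mult_pos_pos) auto
    fix g d e :: 'a
    have "\<nu> * (2 * \<gamma> - 1) * (g \<bullet> d) \<le> \<bar>\<nu> * (2 * \<gamma> - 1)\<bar> * (norm g * norm d)"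
      "(\<gamma> - 2 * \<gamma>\<^sup>2) * (g \<bullet> e) \<le> \<bar>\<gamma> - 2 * \<gamma>\<^sup>2\<bar> * (norm g * norm e)"
      "- (2 * \<nu> * (1 - \<gamma>)) * (d \<bullet> e) \<le> 2 * \<nu> * (1 - \<gamma>) * (norm d * norm e)"
      using mult_inner_le_abs_mult_norm[of "- (2 * \<nu> * (1 - \<gamma>))" d e] assms(4) bounds(1)
      by (simp_all add: mult_inner_le_abs_mult_norm abs_mult)
    then show "g \<bullet> (\<nu> *\<^sub>R d - \<gamma> *\<^sub>R (g + e)) + (L / 2 + c) * (norm (\<nu> *\<^sub>R d - \<gamma> *\<^sub>R (g + e)))\<^sup>2
        - c * (norm d)\<^sup>2 \<le> - \<epsilon> * ((norm g)\<^sup>2 + (norm d)\<^sup>2) + (C0 + \<gamma> * (1 - \<gamma>)) * (norm e)\<^sup>2"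
      using heavy_ball_increment_expansion[OF k(1), of g \<nu> d e c] absorb[of "norm g" "norm d" "norm e"]
      unfolding k(2) B_def by (simp add: algebra_simps)
  qed
qed

text \<open>The step-size conditions enter only through the quadratic inequality \<open>dissipation\<close>,
  established in \<open>heavy_ball_dissipation_inequality\<close>.\<close>
locale heavy_ball_dissipative =
  fixes \<phi> :: "'a::euclidean_space \<Rightarrow> real" and g :: "'a \<Rightarrow> 'a"
    and L :: real and u\<^sub>s :: 'a and \<mu>1 \<mu>2 :: "real \<Rightarrow> real"
    and \<gamma> \<nu> c \<epsilon> C :: real
  assumes A: "assumption_A \<phi> g L u\<^sub>s \<mu>1 \<mu>2"
    and c_pos: "0 < c" and \<epsilon>_pos: "0 < \<epsilon>" and C_pos: "0 < C"
    and dissipation: "\<And>v d e :: 'a. v \<bullet> (\<nu> *\<^sub>R d - \<gamma> *\<^sub>R (v + e))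
        + (L / 2 + c) * (norm (\<nu> *\<^sub>R d - \<gamma> *\<^sub>R (v + e)))\<^sup>2 - c * (norm d)\<^sup>2
      \<le> - \<epsilon> * ((norm v)\<^sup>2 + (norm d)\<^sup>2) + C * (norm e)\<^sup>2"
begin

lemma gradient: "(\<phi> has_derivative (\<lambda>h. g u \<bullet> h)) (at u)"
  and gradient_lipschitz: "norm (g u - g v) \<le> L * norm (u - v)"
  and gradient_minimizer: "g u\<^sub>s = 0"
  and L_pos: "0 < L"
  and class_K_inf_\<mu>1: "class_K_inf \<mu>1"
  and class_K_inf_\<mu>2: "class_K_inf \<mu>2"
  and excess_lower: "\<mu>1 (norm (u - u\<^sub>s)) \<le> \<phi> u - \<phi> u\<^sub>s"
  and gradient_lower: "\<mu>2 (\<phi> u - \<phi> u\<^sub>s) \<le> norm (g u)"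
  using A unfolding assumption_A_def by auto

lemma class_K_\<mu>1: "class_K \<mu>1" and class_K_\<mu>2: "class_K \<mu>2"
  using class_K_inf_\<mu>1 class_K_inf_\<mu>2 unfolding class_K_inf_def by auto

definition lyapunov :: "'a \<times> 'a \<Rightarrow> real" where
  "lyapunov x = \<phi> (fst x) - \<phi> u\<^sub>s + c * (norm (fst x - snd x))\<^sup>2"

lemma excess_nonneg: "0 \<le> \<phi> u - \<phi> u\<^sub>s"
  using excess_lower[of u] class_K_nonneg[OF class_K_\<mu>1 norm_ge_zero[of "u - u\<^sub>s"]] by linarith

lemma excess_le: "\<phi> u - \<phi> u\<^sub>s \<le> L / 2 * (norm (u - u\<^sub>s))\<^sup>2"
  using lipschitz_gradient_upper_bound[OF gradient gradient_lipschitz, of u\<^sub>s "u - u\<^sub>s"]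
  by (simp add: gradient_minimizer)

lemma lyapunov_nonneg: "0 \<le> lyapunov x"
  unfolding lyapunov_def using excess_nonneg c_pos by simp

lemma lyapunov_step:
  "lyapunov (heavy_ball g \<gamma> \<nu> (u, w) e)
     \<le> lyapunov (u, w) - \<epsilon> * ((norm (g u))\<^sup>2 + (norm (u - w))\<^sup>2) + C * (norm e)\<^sup>2"
proof -
  define d where "d = \<nu> *\<^sub>R (u - w) - \<gamma> *\<^sub>R (g u + e)"
  have "heavy_ball g \<gamma> \<nu> (u, w) e = (u + d, u)"
    unfolding heavy_ball_def d_def by (simp add: algebra_simps)
  then have "lyapunov (heavy_ball g \<gamma> \<nu> (u, w) e) = \<phi> (u + d) - \<phi> u\<^sub>s + c * (norm d)\<^sup>2"
    unfolding lyapunov_def by simp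
  also have "\<dots> \<le> \<phi> u - \<phi> u\<^sub>s + g u \<bullet> d + (L / 2 + c) * (norm d)\<^sup>2"
    using lipschitz_gradient_upper_bound[OF gradient gradient_lipschitz, of u d]
    by (simp add: algebra_simps)
  finally show ?thesis
    using dissipation[of "g u" "u - w" e] unfolding lyapunov_def d_def by simp
qed

lemma infdist_equilibrium: "infdist x {(u\<^sub>s, u\<^sub>s)} = norm (fst x - u\<^sub>s, snd x - u\<^sub>s)"
  by (cases x) (simp add: dist_norm)

lemma infdist_le_lyapunov:
  "infdist x {(u\<^sub>s, u\<^sub>s)} \<le> 2 * class_K_inv \<mu>1 (lyapunov x) + sqrt (lyapunov x / c)"
proof -
  obtain u w where x: "x = (u, w)" by (cases x)
  have "\<mu>1 (norm (u - u\<^sub>s)) \<le> lyapunov x"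
    using excess_lower[of u] c_pos unfolding lyapunov_def x by (simp add: add_increasing2)
  then have u: "norm (u - u\<^sub>s) \<le> class_K_inv \<mu>1 (lyapunov x)"
    using class_K_mono[OF class_K_inf_inv_class_K[OF class_K_inf_\<mu>1]] class_K_inv_apply[OF class_K_\<mu>1]
      class_K_nonneg[OF class_K_\<mu>1] by (metis norm_ge_zero)
  have "c * (norm (u - w))\<^sup>2 \<le> lyapunov x"
    using excess_nonneg[of u] unfolding lyapunov_def x by simp
  then have "(norm (u - w))\<^sup>2 \<le> lyapunov x / c" using c_pos by (simp add: field_simps)
  then have w: "norm (u - w) \<le> sqrt (lyapunov x / c)" by (simp add: real_le_rsqrt)
  have "infdist x {(u\<^sub>s, u\<^sub>s)} \<le> norm (u - u\<^sub>s) + norm (w - u\<^sub>s)"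
    unfolding infdist_equilibrium x by (simp add: norm_Pair_le)
  also have "norm (w - u\<^sub>s) \<le> norm (u - u\<^sub>s) + norm (u - w)"
    using norm_triangle_ineq[of "u - u\<^sub>s" "w - u"] by (simp add: norm_minus_commute[of u w])
  finally show ?thesis using u w by simp
qed

lemma lyapunov_le_infdist: "lyapunov x \<le> (L / 2 + 4 * c) * (infdist x {(u\<^sub>s, u\<^sub>s)})\<^sup>2"
proof -
  obtain u w where x: "x = (u, w)" by (cases x)
  define r where "r = infdist x {(u\<^sub>s, u\<^sub>s)}"
  have u: "norm (u - u\<^sub>s) \<le> r" and w: "norm (w - u\<^sub>s) \<le> r"
    unfolding r_def infdist_equilibrium x using norm_fst_le norm_snd_le by fastforce+
  then have "norm (u - w) \<le> 2 * r"
    using norm_triangle_ineq4[of "u - u\<^sub>s" "w - u\<^sub>s"] by simp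
  then have "c * (norm (u - w))\<^sup>2 \<le> c * (2 * r)\<^sup>2"
    using c_pos by (intro mult_left_mono power_mono) auto
  moreover have "L / 2 * (norm (u - u\<^sub>s))\<^sup>2 \<le> L / 2 * r\<^sup>2"
    using u L_pos by (intro mult_left_mono power_mono) auto
  ultimately have "lyapunov x \<le> L / 2 * r\<^sup>2 + c * (2 * r)\<^sup>2"
    using excess_le[of u] unfolding lyapunov_def x by simp
  then show ?thesis unfolding r_def by (simp add: algebra_simps power2_eq_square)
qed

text \<open>Either the excess \<open>\<phi> u - \<phi> u\<^sub>s\<close> or the term \<open>c \<parallel>u - w\<parallel>\<^sup>2\<close> carries half of the
  Lyapunov value; \<open>rate\<close> bounds the dissipation from below in both cases.\<close>
definition rate :: "real \<Rightarrow> real" where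
  "rate v = \<epsilon> * min ((\<mu>2 (v / 2))\<^sup>2) (v / (2 * c))"

lemma rate_le: "rate (lyapunov (u, w)) \<le> \<epsilon> * ((norm (g u))\<^sup>2 + (norm (u - w))\<^sup>2)"
proof -
  define v where "v = lyapunov (u, w)"
  have "min ((\<mu>2 (v / 2))\<^sup>2) (v / (2 * c)) \<le> (norm (g u))\<^sup>2 + (norm (u - w))\<^sup>2"
  proof (cases "v / 2 \<le> \<phi> u - \<phi> u\<^sub>s")
    case True
    moreover have "0 \<le> v / 2" using lyapunov_nonneg unfolding v_def by simp
    ultimately have "\<mu>2 (v / 2) \<le> norm (g u)"
      using class_K_mono[OF class_K_\<mu>2] gradient_lower[of u] by (meson order_trans)
    then have "(\<mu>2 (v / 2))\<^sup>2 \<le> (norm (g u))\<^sup>2"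
      using class_K_nonneg[OF class_K_\<mu>2, of "v / 2"] lyapunov_nonneg unfolding v_def
      by (intro power_mono) auto
    then show ?thesis by (simp add: min_le_iff_disj add_increasing2)
  next
    case False
    then have "v / (2 * c) \<le> (norm (u - w))\<^sup>2"
      using c_pos unfolding v_def lyapunov_def by (simp add: field_simps)
    then show ?thesis by (simp add: min_le_iff_disj add_increasing)
  qed
  then show ?thesis unfolding rate_def v_def using \<epsilon>_pos by simp
qed

lemma rate_mono: "mono_on {0..} rate"
proof (rule mono_onI)
  fix s t :: real assume "s \<in> {0..}" "t \<in> {0..}" "s \<le> t"
  then have "(\<mu>2 (s / 2))\<^sup>2 \<le> (\<mu>2 (t / 2))\<^sup>2" "s / (2 * c) \<le> t / (2 * c)"
    using class_K_mono[OF class_K_\<mu>2, of "s / 2" "t / 2"] class_K_nonneg[OF class_K_\<mu>2, of "s / 2"] c_pos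
    by (auto intro: power_mono divide_right_mono)
  then show "rate s \<le> rate t"
    unfolding rate_def using \<epsilon>_pos by (intro mult_left_mono min.mono) auto
qed

lemma rate_zero: "rate 0 = 0"
  using class_K_\<mu>2 unfolding rate_def class_K_def by simp

lemma rate_pos: "0 < t \<Longrightarrow> 0 < rate t"
  using class_K_pos[OF class_K_\<mu>2, of "t / 2"] \<epsilon>_pos c_pos unfolding rate_def by simp

lemma lyapunov_le_if_rate_small:
  assumes v: "0 \<le> v" and s: "0 \<le> s" and small: "rate v < 2 * (C * s\<^sup>2)"
  shows "v \<le> 2 * class_K_inv \<mu>2 (sqrt (2 * C / \<epsilon>) * s) + 4 * c * C / \<epsilon> * s\<^sup>2"
proof -
  let ?K = "sqrt (2 * C / \<epsilon>)"
  have Ks: "0 \<le> ?K * s" using s C_pos \<epsilon>_pos by simp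
  have h: "0 \<le> class_K_inv \<mu>2 (?K * s)" "\<mu>2 (class_K_inv \<mu>2 (?K * s)) = ?K * s"
    using class_K_inf_inv[OF class_K_inf_\<mu>2 Ks] by auto
  have "min ((\<mu>2 (v / 2))\<^sup>2) (v / (2 * c)) < (?K * s)\<^sup>2"
    using small \<epsilon>_pos C_pos unfolding rate_def by (simp add: power_mult_distrib field_simps)
  then consider "(\<mu>2 (v / 2))\<^sup>2 < (?K * s)\<^sup>2" | "v / (2 * c) < (?K * s)\<^sup>2"
    by linarith
  then show ?thesis
  proof cases
    case 1
    then have "\<mu>2 (v / 2) < \<mu>2 (class_K_inv \<mu>2 (?K * s))"
      using h(2) Ks by (simp add: power2_less_imp_less)
    then have "v / 2 < class_K_inv \<mu>2 (?K * s)"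
      using class_K_mono[OF class_K_\<mu>2 h(1)] by (meson linorder_not_le)
    moreover have "0 \<le> 4 * c * C / \<epsilon> * s\<^sup>2" using \<epsilon>_pos C_pos c_pos by simp
    ultimately show ?thesis by linarith
  next
    case 2
    then have "v < 2 * c * (2 * C / \<epsilon>) * s\<^sup>2"
      using c_pos \<epsilon>_pos C_pos by (simp add: power_mult_distrib field_simps)
    then show ?thesis using h(1) by (simp add: algebra_simps)
  qed
qed

theorem ISS_heavy_ball: "ISS (heavy_ball g \<gamma> \<nu>) {(u\<^sub>s, u\<^sub>s)}"
proof (rule dissipative_Lyapunov_imp_ISS[where V = lyapunov and a = rate])
  have "class_K (\<lambda>v. sqrt (v / c))"
    using class_K_comp[OF class_K_sqrt class_K_cmult[OF class_K_id, of "inverse c"]] c_pos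
    by (simp add: divide_inverse_commute)
  then show "class_K (\<lambda>v. 2 * class_K_inv \<mu>1 v + sqrt (v / c))"
    by (intro class_K_add class_K_cmult class_K_inf_inv_class_K class_K_inf_\<mu>1) auto
  show "class_K (\<lambda>r. (L / 2 + 4 * c) * r\<^sup>2)"
    using L_pos c_pos by (intro class_K_cmult class_K_power2) auto
  show "class_K (\<lambda>s. C * s\<^sup>2)"
    using C_pos by (intro class_K_cmult class_K_power2) auto
  show "class_K (\<lambda>s. 2 * class_K_inv \<mu>2 (sqrt (2 * C / \<epsilon>) * s) + 4 * c * C / \<epsilon> * s\<^sup>2)"
    using C_pos c_pos \<epsilon>_pos
    by (intro class_K_add class_K_cmult class_K_power2
        class_K_comp[OF class_K_inf_inv_class_K[OF class_K_inf_\<mu>2]]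
        class_K_cmult[OF class_K_id, of "sqrt (2 * C / \<epsilon>)"]) auto
  show "lyapunov (heavy_ball g \<gamma> \<nu> x e) \<le> lyapunov x - rate (lyapunov x) + C * (norm e)\<^sup>2" for x e
    using lyapunov_step[of "fst x" "snd x" e] rate_le[of "fst x" "snd x"] by simp
qed (use lyapunov_nonneg infdist_le_lyapunov lyapunov_le_infdist rate_mono rate_zero rate_pos
    lyapunov_le_if_rate_small in auto)

end

theorem proposition3:
  fixes \<phi> :: "'a::euclidean_space \<Rightarrow> real" and g :: "'a \<Rightarrow> 'a"
    and L \<gamma> \<nu> :: real and u\<^sub>s :: 'a and \<mu>1 \<mu>2 :: "real \<Rightarrow> real"
  assumes "assumption_A \<phi> g L u\<^sub>s \<mu>1 \<mu>2"
    and "0 < \<gamma>" and "\<gamma> < 2 / (2 + L)"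
    and "0 < \<nu>" and "\<nu> < sqrt (4 * \<gamma> - 2 * \<gamma>\<^sup>2 * (2 + L))"
  shows "ISS (heavy_ball g \<gamma> \<nu>) {(u\<^sub>s, u\<^sub>s)}"
proof -
  have "0 < L" using assms(1) unfolding assumption_A_def by simp
  then obtain \<epsilon> C
    where "heavy_ball_dissipative \<phi> g L u\<^sub>s \<mu>1 \<mu>2 \<gamma> \<nu> ((1 - \<gamma>) / \<gamma> - L / 2) \<epsilon> C"
    using heavy_ball_dissipation_inequality[OF _ assms(2-5)] assms(1)
    unfolding heavy_ball_dissipative_def by metis
  then interpret heavy_ball_dissipative \<phi> g L u\<^sub>s \<mu>1 \<mu>2 \<gamma> \<nu> "(1 - \<gamma>) / \<gamma> - L / 2" \<epsilon> C .
  show ?thesis by (rule ISS_heavy_ball)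
qed

end
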